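(* Let $\alpha=\{a_k\}_{k\ge1}$ be a sequence of positive numbers with $a_k\to\infty$ and $0<x_\alpha\le1$, and let $j\ge2$. If $I(\alpha;j)=\infty$, then $\lim_{N\to\infty}E[U_j^N]=\infty$.
   Context: For $N\ge2$, coupon type $k\in\{1,\dots,N\}$ has probability $a_k/\sum_{i=1}^Na_i$; $U_j^N$ is the number of empty album places of the $j$-th collector when the first collector completes her set (each collector passes duplicates to the next one), with $$E[U_j^N]=\sum_{k=1}^N\int_0^\infty a_k e^{-a_k t}\frac{(a_kt)^{j-1}}{(j-1)!}\prod_{i\ne k,\,1\le i\le N}\big(1-e^{-a_i t}\big)\,dt.$$ Define $x_\alpha:=\inf\{x\in[0,1]:\sum_{k=1}^\infty x^{a_k}=\infty\}$; for $x\in(0,x_\alpha)$ let $L(x;\alpha;j):=\sum_{k=1}^\infty a_k^j\frac{x^{a_k}}{1-x^{a_k}}$ and $F(x;\alpha):=\prod_{k=1}^\infty(1-x^{a_k})$, and $$I(\alpha;j):=\frac{1}{(j-1)!}\int_0^{x_\alpha}L(x;\alpha;j)F(x;\alpha)|\ln x|^{j-1}\frac{dx}{x}.$$ *)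

theory Defs
  imports "HOL-Analysis.Analysis"
begin

text \<open>The sequence alpha = (a_k)_{k>=1} is represented by a :: nat => real, using only
  the indices k >= 1 (the value a 0 is irrelevant).\<close>

definition EU :: "(nat \<Rightarrow> real) \<Rightarrow> nat \<Rightarrow> nat \<Rightarrow> real" where
  "EU a j N = (\<Sum>k\<in>{1..N}. LBINT t:{0<..}.
      a k * exp (- a k * t) * (a k * t) ^ (j - 1) / fact (j - 1) *
      (\<Prod>i\<in>{1..N} - {k}. 1 - exp (- a i * t)))"

definition x_alpha :: "(nat \<Rightarrow> real) \<Rightarrow> real" where
  "x_alpha a = Inf {x \<in> {0..1}. \<not> summable (\<lambda>k. x powr a (Suc k))}"

definition L_fun :: "(nat \<Rightarrow> real) \<Rightarrow> nat \<Rightarrow> real \<Rightarrow> real" where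
  "L_fun a j x = (\<Sum>k. a (Suc k) ^ j * x powr a (Suc k) / (1 - x powr a (Suc k)))"

definition F_fun :: "(nat \<Rightarrow> real) \<Rightarrow> real \<Rightarrow> real" where
  "F_fun a x = (\<Prod>k. 1 - x powr a (Suc k))"

definition I_alpha :: "(nat \<Rightarrow> real) \<Rightarrow> nat \<Rightarrow> ennreal" where
  "I_alpha a j = ennreal (1 / fact (j - 1)) *
     (\<integral>\<^sup>+ x \<in> {0<..<x_alpha a}.
        ennreal (L_fun a j x * F_fun a x * \<bar>ln x\<bar> ^ (j - 1) / x) \<partial>lborel)"

end

theory Submission
  imports Defs "HOL-Probability.Distributions" "HOL-Real_Asymp.Real_Asymp"
begin

text \<open>Substituting \<open>x = exp (- t)\<close> turns the integral formula for \<open>E[U_j^N]\<close> into an integral over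
  \<open>(0, 1)\<close> whose integrand is \<open>L_N(x) F_N(x) |ln x|^(j-1) / ((j-1)! x)\<close>, where \<open>L_N\<close> and \<open>F_N\<close> are
  the \<open>N\<close>-th partial sum of \<open>L\<close> and partial product of \<open>F\<close>: indeed
  \<open>L_N F_N = \<Sum>k. a_k^j x^(a_k) \<Prod>i\<noteq>k. (1 - x^(a_i))\<close>. For \<open>0 < x < x_alpha\<close> the series \<open>\<Sum> y^(a_k)\<close>
  converges for some \<open>y > x\<close>, and since \<open>a_k \<rightarrow> \<infinity>\<close> it dominates \<open>a_k^j x^(a_k)\<close>; so \<open>L_N \<rightarrow> L\<close> and
  \<open>F_N \<rightarrow> F\<close> there, and Fatou's lemma gives \<open>I(alpha; j) \<le> liminf E[U_j^N]\<close>.\<close>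

lemma sum_divide_mult_prod:
  fixes u d :: "'a \<Rightarrow> 'b::field"
  assumes "finite A" "\<And>k. k \<in> A \<Longrightarrow> d k \<noteq> 0"
  shows "(\<Sum>k\<in>A. u k / d k) * (\<Prod>k\<in>A. d k) = (\<Sum>k\<in>A. u k * (\<Prod>i\<in>A - {k}. d i))"
  unfolding sum_distrib_right
proof (rule sum.cong)
  fix k assume "k \<in> A"
  then show "u k / d k * prod d A = u k * prod d (A - {k})"
    using assms by (simp add: prod.remove)
qed simp

lemma filterlim_at_top_if_Liminf_ennreal_top:
  fixes f :: "nat \<Rightarrow> real"
  assumes "liminf (\<lambda>n. ennreal (f n)) = \<infinity>"
  shows "filterlim f at_top sequentially"
proof -
  have "limsup (\<lambda>n. ennreal (f n)) = \<infinity>"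
    using Liminf_le_Limsup[of sequentially "\<lambda>n. ennreal (f n)"] assms by (simp add: top_unique)
  then have "((\<lambda>n. ennreal (f n)) \<longlongrightarrow> \<infinity>) sequentially"
    using assms by (simp add: tendsto_iff_Liminf_eq_Limsup)
  then show ?thesis by (simp add: ennreal_tendsto_top_eq_at_top)
qed

lemma nn_set_integral_incseq_LIMSEQ:
  fixes f :: "'a \<Rightarrow> real"
  assumes [measurable]: "f \<in> borel_measurable M" "\<And>i. A i \<in> sets M" and A: "incseq A"
  shows "(\<lambda>i. \<integral>\<^sup>+x\<in>A i. ennreal (f x) \<partial>M) \<longlonglongrightarrow> (\<integral>\<^sup>+x\<in>(\<Union>i. A i). ennreal (f x) \<partial>M)"
proof (rule nn_integral_LIMSEQ)
  show "incseq (\<lambda>i x. ennreal (f x) * indicator (A i) x)"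
    using A by (intro incseq_SucI le_funI mult_left_mono) (auto simp: incseq_Suc_iff indicator_def)
  show "(\<lambda>i. ennreal (f x) * indicator (A i) x) \<longlonglongrightarrow> ennreal (f x) * indicator (\<Union>i. A i) x" for x
    by (intro ennreal_tendsto_cmult LIMSEQ_indicator_incseq A) simp
qed simp

lemma nn_integral_exp_neg_substitution:
  fixes f :: "real \<Rightarrow> real"
  assumes [measurable]: "f \<in> borel_measurable borel"
  shows "(\<integral>\<^sup>+x\<in>{0<..<1}. ennreal (f x) \<partial>lborel)
       = (\<integral>\<^sup>+t\<in>{0<..}. ennreal (f (exp (- t)) * exp (- t)) \<partial>lborel)"
proof -
  have exp_Icc: "(\<Union>n. {exp (- real n)..1}) = {0<..1::real}"
  proof (intro equalityI subsetI)
    fix x :: real assume "x \<in> {0<..1}"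
    moreover obtain n where "- ln x \<le> real n" using real_arch_simple by blast
    ultimately have "x \<in> {exp (- real n)..1}"
      by (metis atLeastAtMost_iff exp_le_cancel_iff exp_ln greaterThanAtMost_iff minus_le_iff)
    then show "x \<in> (\<Union>n. {exp (- real n)..1})" by blast
  qed (auto intro: less_le_trans[OF exp_gt_zero])
  have log_Icc: "(\<Union>n. {- real n..0}) = {..0::real}"
  proof (intro equalityI subsetI)
    fix s :: real assume "s \<in> {..0}"
    moreover obtain n where "- s \<le> real n" using real_arch_simple by blast
    ultimately show "s \<in> (\<Union>n. {- real n..0})" by (auto simp: minus_le_iff)
  qed auto
  have "(\<lambda>n. \<integral>\<^sup>+x\<in>{exp (- real n)..1}. ennreal (f x) \<partial>lborel)
         \<longlonglongrightarrow> (\<integral>\<^sup>+x\<in>{0<..1}. ennreal (f x) \<partial>lborel)"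
    using nn_set_integral_incseq_LIMSEQ[of f lborel "\<lambda>n. {exp (- real n)..1}"]
    by (simp add: exp_Icc incseq_def)
  moreover have "(\<integral>\<^sup>+x\<in>{exp (- real n)..1}. ennreal (f x) \<partial>lborel)
         = (\<integral>\<^sup>+s\<in>{- real n..0}. ennreal (f (exp s) * exp s) \<partial>lborel)" for n
    using nn_integral_substitution[where f=f and g=exp and g'=exp and a="- real n" and b=0]
    by (simp add: nn_integral_set_ennreal mult.assoc continuous_on_exp set_borel_measurable_def)
  moreover have "(\<lambda>n. \<integral>\<^sup>+s\<in>{- real n..0}. ennreal (f (exp s) * exp s) \<partial>lborel)
         \<longlonglongrightarrow> (\<integral>\<^sup>+s\<in>{..0}. ennreal (f (exp s) * exp s) \<partial>lborel)"
    using nn_set_integral_incseq_LIMSEQ[of "\<lambda>s. f (exp s) * exp s" lborel "\<lambda>n. {- real n..0}"]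
    by (simp add: log_Icc incseq_def)
  ultimately have "(\<integral>\<^sup>+x\<in>{0<..1}. ennreal (f x) \<partial>lborel)
         = (\<integral>\<^sup>+s\<in>{..0}. ennreal (f (exp s) * exp s) \<partial>lborel)"
    using LIMSEQ_unique by simp
  also have "\<dots> = (\<integral>\<^sup>+t\<in>{0..}. ennreal (f (exp (- t)) * exp (- t)) \<partial>lborel)"
    using nn_integral_real_affine[where c="-1" and t=0 and f="\<lambda>s. ennreal (f (exp s) * exp s) * indicator {..0} s"]
    by (simp add: indicator_def)
  moreover have "(\<integral>\<^sup>+x\<in>{0<..<1}. ennreal (f x) \<partial>lborel) = (\<integral>\<^sup>+x\<in>{0<..1}. ennreal (f x) \<partial>lborel)"
    by (intro nn_integral_cong_AE) (use AE_lborel_singleton[of 1] in \<open>auto simp: indicator_def\<close>)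
  moreover have "(\<integral>\<^sup>+t\<in>{0..}. ennreal (f (exp (- t)) * exp (- t)) \<partial>lborel)
         = (\<integral>\<^sup>+t\<in>{0<..}. ennreal (f (exp (- t)) * exp (- t)) \<partial>lborel)"
    by (intro nn_integral_cong_AE) (use AE_lborel_singleton[of 0] in \<open>auto simp: indicator_def\<close>)
  ultimately show ?thesis by simp
qed

lemma integrable_erlang_density:
  assumes "0 < c"
  shows "integrable lborel (erlang_density m c)"
  using nn_integral_erlang_ith_moment[OF assms, of m 0] assms
  by (intro integrableI_nn_integral_finite[where x=1]) auto

lemma set_integral_erlang_weighted:
  fixes c :: real and P :: "real \<Rightarrow> real"
  assumes c: "0 < c" and [measurable]: "P \<in> borel_measurable borel"
    and P: "\<And>t. 0 \<le> t \<Longrightarrow> 0 \<le> P t \<and> P t \<le> 1"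
  shows "0 \<le> (LBINT t:{0<..}. c * exp (- c * t) * (c * t) ^ m / fact m * P t)"
    and "ennreal (LBINT t:{0<..}. c * exp (- c * t) * (c * t) ^ m / fact m * P t)
       = (\<integral>\<^sup>+t\<in>{0<..}. ennreal (c * exp (- c * t) * (c * t) ^ m / fact m * P t) \<partial>lborel)"
proof -
  let ?w = "\<lambda>t. erlang_density m c t * P t"
  have w_eq: "?w t = c * exp (- c * t) * (c * t) ^ m / fact m * P t" if "t \<in> {0<..}" for t
    using that by (simp add: erlang_density_def power_mult_distrib)
  have w_nonneg: "0 \<le> ?w t" for t
    using P[of t] c by (cases "t < 0") (auto simp: erlang_density_def)
  have "integrable lborel ?w"
  proof (rule Bochner_Integration.integrable_bound[OF integrable_erlang_density[OF c]])
    show "AE t in lborel. norm (?w t) \<le> norm (erlang_density m c t)"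
    proof (intro AE_I2)
      fix t :: real
      have "?w t \<le> erlang_density m c t"
      proof (cases "t < 0")
        case False
        then show ?thesis using P[of t] c by (intro mult_left_le) auto
      qed (simp add: erlang_density_def)
      then show "norm (?w t) \<le> norm (erlang_density m c t)"
        using w_nonneg[of t] c by simp
    qed
  qed simp
  then have "(\<integral>\<^sup>+t\<in>{0<..}. ennreal (?w t) \<partial>lborel) = ennreal (LBINT t:{0<..}. ?w t)"
    using w_nonneg by (intro nn_set_integral_eq_set_integral) auto
  moreover have "(LBINT t:{0<..}. ?w t) = (LBINT t:{0<..}. c * exp (- c * t) * (c * t) ^ m / fact m * P t)"
    using w_eq by (intro set_lebesgue_integral_cong) auto
  moreover have "(\<integral>\<^sup>+t\<in>{0<..}. ennreal (?w t) \<partial>lborel)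
      = (\<integral>\<^sup>+t\<in>{0<..}. ennreal (c * exp (- c * t) * (c * t) ^ m / fact m * P t) \<partial>lborel)"
    using w_eq by (intro set_nn_integral_cong) auto
  moreover have "0 \<le> (LBINT t:{0<..}. ?w t)"
    unfolding set_lebesgue_integral_def using w_nonneg by (intro Bochner_Integration.integral_nonneg) simp
  ultimately show "0 \<le> (LBINT t:{0<..}. c * exp (- c * t) * (c * t) ^ m / fact m * P t)"
    and "ennreal (LBINT t:{0<..}. c * exp (- c * t) * (c * t) ^ m / fact m * P t)
       = (\<integral>\<^sup>+t\<in>{0<..}. ennreal (c * exp (- c * t) * (c * t) ^ m / fact m * P t) \<partial>lborel)"
    by simp_all
qed

lemma summable_powr_below_x_alpha:
  assumes "0 \<le> y" "y < x_alpha a" "x_alpha a \<le> 1"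
  shows "summable (\<lambda>k. y powr a (Suc k))"
proof (rule ccontr)
  assume "\<not> summable (\<lambda>k. y powr a (Suc k))"
  with assms have "x_alpha a \<le> y"
    unfolding x_alpha_def by (intro cInf_lower bdd_belowI[of _ 0]) auto
  with assms show False by simp
qed

lemma summable_weighted_powr_div:
  fixes b :: "nat \<Rightarrow> real" and j :: nat
  assumes b: "filterlim b at_top sequentially"
    and y: "summable (\<lambda>k. y powr b k)" and x: "0 < x" "x < y"
  shows "summable (\<lambda>k. b k ^ j * x powr b k / (1 - x powr b k))"
proof (rule summable_comparison_test_ev)
  define c where "c = ln y - ln x"
  have c: "0 < c" using x by (simp add: c_def)
  have x_powr: "x powr z = exp (- c * z) * y powr z" for z
    using x by (simp add: c_def powr_def algebra_simps flip: exp_add)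
  have "((\<lambda>z. z ^ j * exp (- c * z)) \<longlongrightarrow> 0) at_top"
    using c by real_asymp
  then have "((\<lambda>k. b k ^ j * exp (- c * b k)) \<longlongrightarrow> 0) sequentially"
    using b by (rule filterlim_compose)
  then have ev_poly: "eventually (\<lambda>k. b k ^ j * exp (- c * b k) < 1) sequentially"
    by (rule order_tendstoD) simp
  have "eventually (\<lambda>k. y powr b k < 1/2) sequentially"
    using summable_LIMSEQ_zero[OF y] by (rule order_tendstoD) simp
  moreover have "eventually (\<lambda>k. 0 < b k) sequentially"
    using b by (simp add: filterlim_at_top_dense)
  ultimately show "eventually (\<lambda>k. norm (b k ^ j * x powr b k / (1 - x powr b k)) \<le> 2 * y powr b k) sequentially"
    using ev_poly
  proof eventually_elim
    case (elim k)
    have "x powr b k \<le> y powr b k"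
      using x elim(2) by (intro powr_mono2) auto
    then have small: "x powr b k < 1/2" using elim(1) by simp
    have "b k ^ j * x powr b k = (b k ^ j * exp (- c * b k)) * y powr b k"
      by (simp add: x_powr)
    also have "\<dots> \<le> y powr b k"
      using elim(2,3) by (intro mult_left_le_one_le) (auto intro: less_imp_le)
    finally have "b k ^ j * x powr b k / (1 - x powr b k) \<le> y powr b k / (1/2)"
      using small elim(2) by (intro frac_le) auto
    then show ?case using small elim(2) by simp
  qed
qed (intro summable_mult y)

lemma partial_L_F_tendsto:
  fixes a :: "nat \<Rightarrow> real"
  assumes pos: "\<And>k. k \<ge> 1 \<Longrightarrow> a k > 0" and lim: "filterlim a at_top sequentially"
    and xle: "x_alpha a \<le> 1" and x: "0 < x" "x < x_alpha a"
  shows "(\<lambda>N. (\<Sum>k<N. a (Suc k) ^ j * x powr a (Suc k) / (1 - x powr a (Suc k)))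
              * (\<Prod>k<N. 1 - x powr a (Suc k))) \<longlonglongrightarrow> L_fun a j x * F_fun a x"
proof (rule tendsto_mult)
  have lim': "filterlim (\<lambda>k. a (Suc k)) at_top sequentially"
    using lim by (simp add: filterlim_sequentially_Suc)
  have "summable (\<lambda>k. ((x + x_alpha a) / 2) powr a (Suc k))"
    using x xle by (intro summable_powr_below_x_alpha) auto
  then have "summable (\<lambda>k. a (Suc k) ^ j * x powr a (Suc k) / (1 - x powr a (Suc k)))"
    using x by (intro summable_weighted_powr_div[OF lim', where y="(x + x_alpha a) / 2"]) auto
  then show "(\<lambda>N. \<Sum>k<N. a (Suc k) ^ j * x powr a (Suc k) / (1 - x powr a (Suc k))) \<longlonglongrightarrow> L_fun a j x"
    unfolding L_fun_def by (rule summable_LIMSEQ)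
  have "x powr a (Suc k) < 1" for k
    using x xle pos[of "Suc k"] powr_less_mono2[of "a (Suc k)" x 1] by simp
  moreover have "summable (\<lambda>k. x powr a (Suc k))"
    using x xle by (intro summable_powr_below_x_alpha) auto
  ultimately have "convergent_prod (\<lambda>k. 1 + - (x powr a (Suc k)))"
    by (intro summable_imp_convergent_prod_real) (auto simp: less_le)
  then have "(\<lambda>N. \<Prod>k\<le>N. 1 - x powr a (Suc k)) \<longlonglongrightarrow> F_fun a x"
    unfolding F_fun_def by (simp add: convergent_prod_LIMSEQ)
  then show "(\<lambda>N. \<Prod>k<N. 1 - x powr a (Suc k)) \<longlonglongrightarrow> F_fun a x"
    by (subst filterlim_sequentially_Suc[symmetric]) (simp add: lessThan_Suc_atMost)
qed

lemma partial_L_F_eq: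
  fixes a :: "nat \<Rightarrow> real"
  assumes pos: "\<And>k. k \<ge> 1 \<Longrightarrow> a k > 0" and x: "0 < x" "x < 1"
  shows "(\<Sum>k<N. a (Suc k) ^ j * x powr a (Suc k) / (1 - x powr a (Suc k)))
           * (\<Prod>k<N. 1 - x powr a (Suc k))
       = (\<Sum>k\<in>{1..N}. a k ^ j * x powr a k * (\<Prod>i\<in>{1..N} - {k}. 1 - x powr a i))"
proof -
  have "1 - x powr a k \<noteq> 0" if "k \<in> {1..N}" for k
    using x pos[of k] that powr_less_mono2[of "a k" x 1] by auto
  then show ?thesis
    using sum_divide_mult_prod[of "{1..N}" "\<lambda>k. 1 - x powr a k" "\<lambda>k. a k ^ j * x powr a k"]
    by (simp add: sum.atLeast1_atMost_eq prod.atLeast1_atMost_eq)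
qed

text \<open>The integrand of \<open>EU\<close> after the substitution \<open>t = - ln x\<close>.\<close>
definition EU_density :: "(nat \<Rightarrow> real) \<Rightarrow> nat \<Rightarrow> nat \<Rightarrow> real \<Rightarrow> real" where
  "EU_density a j N x = (\<Sum>k\<in>{1..N}. a k ^ j * x powr a k * (\<Prod>i\<in>{1..N} - {k}. 1 - x powr a i))
      * \<bar>ln x\<bar> ^ (j - 1) / (fact (j - 1) * x)"

lemma EU_eq_nn_integral_EU_density:
  fixes a :: "nat \<Rightarrow> real"
  assumes pos: "\<And>k. k \<ge> 1 \<Longrightarrow> a k > 0" and j: "j \<ge> 1"
  shows "ennreal (EU a j N) = (\<integral>\<^sup>+x\<in>{0<..<1}. ennreal (EU_density a j N x) \<partial>lborel)"
proof -
  define P where "P k t = (\<Prod>i\<in>{1..N} - {k}. 1 - exp (- a i * t))" for k t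
  define f where "f k t = a k * exp (- a k * t) * (a k * t) ^ (j - 1) / fact (j - 1) * P k t" for k t
  have factor_bounds: "0 \<le> 1 - exp (- a i * t) \<and> 1 - exp (- a i * t) \<le> 1" if "i \<ge> 1" "0 \<le> t" for i t
  proof -
    have "0 \<le> a i * t" using pos[OF that(1)] that(2) by simp
    then show ?thesis by simp
  qed
  have P_bounds: "0 \<le> P k t \<and> P k t \<le> 1" if "0 \<le> t" for k t
    unfolding P_def using factor_bounds that by (intro conjI prod_nonneg prod_le_1) auto
  have f_nonneg: "0 \<le> f k t" if "k \<in> {1..N}" "0 \<le> t" for k t
    unfolding f_def using P_bounds[OF that(2), of k] pos[of k] that by auto
  have f_integral: "0 \<le> (LBINT t:{0<..}. f k t)"
    "ennreal (LBINT t:{0<..}. f k t) = (\<integral>\<^sup>+t\<in>{0<..}. ennreal (f k t) \<partial>lborel)"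
    if "k \<in> {1..N}" for k
    using set_integral_erlang_weighted[of "a k" "P k" "j - 1"] pos[of k] that P_bounds
    unfolding f_def P_def by auto
  have EU_sum: "EU a j N = (\<Sum>k\<in>{1..N}. LBINT t:{0<..}. f k t)"
    unfolding EU_def f_def P_def ..
  have "ennreal (EU a j N) = (\<Sum>k\<in>{1..N}. ennreal (LBINT t:{0<..}. f k t))"
    unfolding EU_sum by (rule sum_ennreal[symmetric, OF f_integral(1)])
  also have "\<dots> = (\<Sum>k\<in>{1..N}. \<integral>\<^sup>+t\<in>{0<..}. ennreal (f k t) \<partial>lborel)"
    using f_integral(2) by simp
  also have "\<dots> = (\<integral>\<^sup>+t\<in>{0<..}. (\<Sum>k\<in>{1..N}. ennreal (f k t)) \<partial>lborel)"
    unfolding sum_distrib_right by (rule nn_integral_sum[symmetric]) (simp add: f_def P_def)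
  also have "\<dots> = (\<integral>\<^sup>+t\<in>{0<..}. ennreal (\<Sum>k\<in>{1..N}. f k t) \<partial>lborel)"
    using f_nonneg by (intro set_nn_integral_cong sum_ennreal) auto
  also have "\<dots> = (\<integral>\<^sup>+t\<in>{0<..}. ennreal (EU_density a j N (exp (- t)) * exp (- t)) \<partial>lborel)"
  proof (intro set_nn_integral_cong refl arg_cong[where f=ennreal])
    fix t :: real assume "t \<in> space lborel \<inter> {0<..}"
    then have t: "0 < t" by simp
    obtain m where m: "j = Suc m" using j by (cases j) auto
    have "exp (- t) powr c = exp (- c * t)" for c by (simp add: powr_def)
    then show "(\<Sum>k\<in>{1..N}. f k t) = EU_density a j N (exp (- t)) * exp (- t)"
      using t unfolding EU_density_def f_def P_def m
      by (simp add: power_mult_distrib sum_distrib_left sum_distrib_right sum_divide_distrib mult_ac)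
  qed
  also have "\<dots> = (\<integral>\<^sup>+x\<in>{0<..<1}. ennreal (EU_density a j N x) \<partial>lborel)"
    by (rule nn_integral_exp_neg_substitution[symmetric]) (simp add: EU_density_def)
  finally show ?thesis .
qed

lemma EU_density_tendsto:
  fixes a :: "nat \<Rightarrow> real"
  assumes pos: "\<And>k. k \<ge> 1 \<Longrightarrow> a k > 0" and lim: "filterlim a at_top sequentially"
    and xle: "x_alpha a \<le> 1" and x: "0 < x" "x < x_alpha a"
  shows "(\<lambda>N. EU_density a j N x)
           \<longlonglongrightarrow> L_fun a j x * F_fun a x * \<bar>ln x\<bar> ^ (j - 1) / x / fact (j - 1)"
proof -
  have "x < 1" using x xle by simp
  then have "EU_density a j N x = (\<Sum>k<N. a (Suc k) ^ j * x powr a (Suc k) / (1 - x powr a (Suc k)))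
           * (\<Prod>k<N. 1 - x powr a (Suc k)) * \<bar>ln x\<bar> ^ (j - 1) / x / fact (j - 1)" for N
    using partial_L_F_eq[of a, OF pos x(1)] by (simp add: EU_density_def mult.commute)
  then show ?thesis
    using partial_L_F_tendsto[OF pos lim xle x, of j] x by (auto intro!: tendsto_intros)
qed

lemma I_alpha_le_liminf_EU:
  fixes a :: "nat \<Rightarrow> real"
  assumes pos: "\<And>k. k \<ge> 1 \<Longrightarrow> a k > 0" and lim: "filterlim a at_top sequentially"
    and xle: "x_alpha a \<le> 1" and j: "j \<ge> 1"
  shows "I_alpha a j \<le> liminf (\<lambda>N. ennreal (EU a j N))"
proof -
  define S where "S = {0<..<x_alpha a}"
  define g where "g N x = EU_density a j N x * indicator S x" for N x
  define J where "J x = L_fun a j x * F_fun a x * \<bar>ln x\<bar> ^ (j - 1) / x * indicator S x" for x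
  have g_tendsto: "(\<lambda>N. g N x) \<longlonglongrightarrow> J x / fact (j - 1)" for x
    unfolding g_def J_def S_def using EU_density_tendsto[OF pos lim xle, of x j]
    by (cases "x \<in> {0<..<x_alpha a}") auto
  have [measurable]: "g N \<in> borel_measurable borel" for N
    unfolding g_def EU_density_def S_def by measurable
  have "(\<lambda>x. J x / fact (j - 1)) \<in> borel_measurable borel"
    by (rule borel_measurable_LIMSEQ_metric[where f=g, OF _ g_tendsto]) simp
  then have "(\<lambda>x. fact (j - 1) * (J x / fact (j - 1))) \<in> borel_measurable borel"
    by measurable
  then have [measurable]: "J \<in> borel_measurable borel"
    by simp
  have "I_alpha a j = ennreal (1 / fact (j - 1)) * (\<integral>\<^sup>+x. ennreal (J x) \<partial>lborel)"
    unfolding I_alpha_def J_def S_def by (simp add: nn_integral_set_ennreal)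
  also have "\<dots> = (\<integral>\<^sup>+x. ennreal (J x / fact (j - 1)) \<partial>lborel)"
    by (subst nn_integral_cmult[symmetric]) (auto simp: ennreal_mult'[symmetric])
  also have "\<dots> = (\<integral>\<^sup>+x. liminf (\<lambda>N. ennreal (g N x)) \<partial>lborel)"
    using g_tendsto by (intro nn_integral_cong lim_imp_Liminf[symmetric] tendsto_ennrealI) simp_all
  also have "\<dots> \<le> liminf (\<lambda>N. \<integral>\<^sup>+x. ennreal (g N x) \<partial>lborel)"
    by (rule nn_integral_liminf) simp
  also have "\<dots> \<le> liminf (\<lambda>N. ennreal (EU a j N))"
  proof (intro Liminf_mono always_eventually allI)
    fix N
    have "(\<integral>\<^sup>+x. ennreal (g N x) \<partial>lborel) \<le> (\<integral>\<^sup>+x\<in>{0<..<1}. ennreal (EU_density a j N x) \<partial>lborel)"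
      unfolding g_def S_def using xle
      by (auto simp: nn_integral_set_ennreal[symmetric] intro!: nn_set_integral_set_mono)
    then show "(\<integral>\<^sup>+x. ennreal (g N x) \<partial>lborel) \<le> ennreal (EU a j N)"
      using EU_eq_nn_integral_EU_density[OF pos j] by simp
  qed
  finally show ?thesis .
qed

theorem proposition2:
  fixes a :: "nat \<Rightarrow> real" and j :: nat
  assumes pos: "\<And>k. k \<ge> 1 \<Longrightarrow> a k > 0"
    and lim: "filterlim a at_top sequentially"
    and xpos: "0 < x_alpha a" and xle: "x_alpha a \<le> 1"
    and j: "j \<ge> 2"
    and Iinf: "I_alpha a j = \<infinity>"
  shows "filterlim (\<lambda>N. EU a j N) at_top sequentially"
proof (rule filterlim_at_top_if_Liminf_ennreal_top)
  have "I_alpha a j \<le> liminf (\<lambda>N. ennreal (EU a j N))"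
    using I_alpha_le_liminf_EU[OF pos lim xle] j by simp
  then show "liminf (\<lambda>N. ennreal (EU a j N)) = \<infinity>"
    using Iinf by (simp add: top_unique)
qed

end
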